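(* Let $k\geq 0$ be an integer. If $F$ is a forest on $n$ vertices, then $\alpha_k(F)\geq \Big\lceil\frac{k+1}{k+2}\,n\Big\rceil$.
   Context: All graphs are finite and simple. For a graph $G$, a $k$-sparse set is a set of vertices inducing a subgraph of maximum degree at most $k$, and $\alpha_k(G)$ denotes the maximum size of a $k$-sparse set in $G$. A forest is a graph with no cycles. *)

theory Defs
  imports Main "HOL-Library.Multiset" Complex_Main
begin

definition simple_graph :: "'a set \<Rightarrow> ('a \<Rightarrow> 'a \<Rightarrow> bool) \<Rightarrow> bool" where
  "simple_graph V E \<longleftrightarrow> finite V \<and> (\<forall>u v. E u v \<longrightarrow> u \<in> V \<and> v \<in> V)
     \<and> (\<forall>u v. E u v \<longrightarrow> E v u) \<and> (\<forall>v. \<not> E v v)"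

definition is_cycle :: "'a set \<Rightarrow> ('a \<Rightarrow> 'a \<Rightarrow> bool) \<Rightarrow> 'a list \<Rightarrow> bool" where
  "is_cycle V E cs \<longleftrightarrow> length cs \<ge> 3 \<and> distinct cs \<and> set cs \<subseteq> V
     \<and> (\<forall>i. Suc i < length cs \<longrightarrow> E (cs ! i) (cs ! Suc i))
     \<and> E (last cs) (hd cs)"

definition forest :: "'a set \<Rightarrow> ('a \<Rightarrow> 'a \<Rightarrow> bool) \<Rightarrow> bool" where
  "forest V E \<longleftrightarrow> simple_graph V E \<and> \<not> (\<exists>cs. is_cycle V E cs)"

definition k_sparse :: "'a set \<Rightarrow> ('a \<Rightarrow> 'a \<Rightarrow> bool) \<Rightarrow> nat \<Rightarrow> 'a set \<Rightarrow> bool" where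
  "k_sparse V E k S \<longleftrightarrow> S \<subseteq> V \<and> (\<forall>v\<in>S. card {u\<in>S. E v u} \<le> k)"

definition alpha_k :: "'a set \<Rightarrow> ('a \<Rightarrow> 'a \<Rightarrow> bool) \<Rightarrow> nat \<Rightarrow> nat" where
  "alpha_k V E k = Max {card S | S. k_sparse V E k S}"

end

theory Submission
  imports Defs
begin

(* A forest is 1-degenerate: every nonempty vertex set W contains a vertex u with at most one
   neighbour in W, namely an end of a longest path in W.  Peel such vertices off one at a time,
   keeping offsets a v that record degree which v has already committed to vertices put into S.
   If a u > k, u is discarded; otherwise u joins S, and if it has a neighbour p left, the offset
   of u plus the edge u p is charged to p, so both stay within budget if p later joins S.
   This maintains (k + 2) |W - S| <= |W| + sum a, since a discarded vertex pays for itself with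
   its offset and charging to p does not change |W| + sum a.  With a = 0 this gives
   (k + 1) |V| <= (k + 2) |S|. *)

definition one_degenerate :: "('a \<Rightarrow> 'a \<Rightarrow> bool) \<Rightarrow> 'a set \<Rightarrow> bool" where
  "one_degenerate E W \<longleftrightarrow> (\<forall>U\<subseteq>W. U \<noteq> {} \<longrightarrow> (\<exists>u\<in>U. card {x\<in>U. E u x} \<le> 1))"

definition graph_path :: "('a \<Rightarrow> 'a \<Rightarrow> bool) \<Rightarrow> 'a set \<Rightarrow> 'a list \<Rightarrow> bool" where
  "graph_path E W xs \<longleftrightarrow>
     distinct xs \<and> set xs \<subseteq> W \<and> (\<forall>i. Suc i < length xs \<longrightarrow> E (xs ! i) (xs ! Suc i))"

lemma graph_path_Cons:
  "graph_path E W (x # xs) \<longleftrightarrow>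
     x \<notin> set xs \<and> x \<in> W \<and> (xs \<noteq> [] \<longrightarrow> E x (hd xs)) \<and> graph_path E W xs"
  by (auto simp: graph_path_def nth_Cons hd_conv_nth split: nat.splits)

lemma longest_graph_path_exists:
  assumes "finite W" "W \<noteq> {}"
  obtains P where "graph_path E W P" "P \<noteq> []"
    "\<And>xs. graph_path E W xs \<Longrightarrow> length xs \<le> length P"
proof -
  obtain w where "w \<in> W" using assms(2) by blast
  then have path_w: "graph_path E W [w]" by (simp add: graph_path_def)
  have "length xs < Suc (card W)" if "graph_path E W xs" for xs
  proof -
    have "length xs = card (set xs)" using that by (simp add: graph_path_def distinct_card)
    also have "\<dots> \<le> card W" using that assms(1) by (intro card_mono) (auto simp: graph_path_def)
    finally show ?thesis by simp
  qed
  then obtain P where P: "graph_path E W P"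
    and longest: "\<forall>xs. graph_path E W xs \<longrightarrow> length xs \<le> length P"
    using Lattices_Big.ex_has_greatest_nat[of "graph_path E W" "[w]" length] path_w by blast
  have "length [w] \<le> length P" using longest path_w by blast
  then have "P \<noteq> []" by auto
  then show thesis using that P longest by blast
qed

lemma longest_graph_path_hd_neighbours:
  assumes sym: "\<And>x y. E x y \<Longrightarrow> E y x" and "graph_path E W P" "P \<noteq> []"
    and longest: "\<And>xs. graph_path E W xs \<Longrightarrow> length xs \<le> length P"
  shows "{x\<in>W. E (hd P) x} \<subseteq> set P"
proof
  fix x assume "x \<in> {x\<in>W. E (hd P) x}"
  then have "x \<notin> set P \<Longrightarrow> graph_path E W (x # P)"
    using assms by (simp add: graph_path_Cons)
  then show "x \<in> set P" using longest[of "x # P"] by force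
qed

lemma graph_path_chord_cycle:
  assumes "graph_path E W P" "W \<subseteq> V" "2 \<le> m" "m < length P" "E (P ! m) (P ! 0)"
  shows "is_cycle V E (take (Suc m) P)"
  unfolding is_cycle_def
proof (intro conjI allI impI)
  show "3 \<le> length (take (Suc m) P)" "distinct (take (Suc m) P)"
    using assms(1,3,4) by (auto simp: graph_path_def)
  show "set (take (Suc m) P) \<subseteq> V"
    using set_take_subset[of "Suc m" P] assms(1,2) by (auto simp: graph_path_def)
  show "E (take (Suc m) P ! i) (take (Suc m) P ! Suc i)" if "Suc i < length (take (Suc m) P)" for i
    using that assms(1) by (auto simp: graph_path_def)
  show "E (last (take (Suc m) P)) (hd (take (Suc m) P))"
    using assms(3-5) by (simp add: take_Suc_conv_app_nth hd_conv_nth nth_append)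
qed

lemma forest_one_degenerate:
  assumes "forest V E"
  shows "one_degenerate E V"
  unfolding one_degenerate_def
proof (intro allI impI)
  fix W assume W: "W \<subseteq> V" "W \<noteq> {}"
  have G: "simple_graph V E" and acyclic: "\<And>cs. \<not> is_cycle V E cs"
    using assms unfolding forest_def by blast+
  then have finW: "finite W" and sym: "\<And>x y. E x y \<Longrightarrow> E y x" and irr: "\<And>x. \<not> E x x"
    using W(1) finite_subset unfolding simple_graph_def by metis+
  obtain P where P: "graph_path E W P" "P \<noteq> []"
    and longest: "\<And>xs. graph_path E W xs \<Longrightarrow> length xs \<le> length P"
    using longest_graph_path_exists[OF finW W(2)] by blast
  define p where "p = hd P"
  have p: "p = P ! 0" "p \<in> W" using P by (auto simp: p_def hd_conv_nth graph_path_def)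
  have "{x\<in>W. E p x} \<subseteq> {P ! 1}"
  proof
    fix x assume x: "x \<in> {x\<in>W. E p x}"
    then obtain m where m: "m < length P" "P ! m = x"
      using longest_graph_path_hd_neighbours[OF sym P longest] by (metis p_def in_set_conv_nth subsetD)
    have "m \<noteq> 0" using x m p irr by (cases m) auto
    moreover have "\<not> 2 \<le> m"
      using graph_path_chord_cycle[OF P(1) W(1) _ m(1)] acyclic sym x m p by auto
    ultimately have "m = 1" by linarith
    then show "x \<in> {P ! 1}" using m by simp
  qed
  then have "card {x\<in>W. E p x} \<le> card {P ! 1}" by (intro card_mono) simp_all
  then have "card {x\<in>W. E p x} \<le> 1" by simp
  then show "\<exists>u\<in>W. card {x\<in>W. E u x} \<le> 1" using p by blast
qed

definition offset_sparse :: "('a \<Rightarrow> 'a \<Rightarrow> bool) \<Rightarrow> nat \<Rightarrow> ('a \<Rightarrow> nat) \<Rightarrow> 'a set \<Rightarrow> bool" where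
  "offset_sparse E k a S \<longleftrightarrow> (\<forall>v\<in>S. a v + card {x\<in>S. E v x} \<le> k)"

lemma offset_sparse_insert_isolated:
  assumes "offset_sparse E k a S" "a u \<le> k" "\<not> E u u" "\<forall>x\<in>S. \<not> E u x \<and> \<not> E x u"
  shows "offset_sparse E k a (insert u S)"
  unfolding offset_sparse_def
proof
  fix v assume "v \<in> insert u S"
  then consider "v = u" | "v \<in> S" "v \<noteq> u" by blast
  then show "a v + card {x\<in>insert u S. E v x} \<le> k"
  proof cases
    case 1
    then have "{x\<in>insert u S. E v x} = {}" using assms(3,4) by auto
    then show ?thesis using 1 assms(2) by (simp only: card.empty)
  next
    case 2
    then have "{x\<in>insert u S. E v x} = {x\<in>S. E v x}" using assms(4) by auto
    then show ?thesis using 2 assms(1) by (simp add: offset_sparse_def)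
  qed
qed

lemma offset_sparse_insert_leaf:
  assumes S: "offset_sparse E k (a(p := a p + 1 + a u)) S" and "finite S" "p \<noteq> u" "a u \<le> k"
    and "\<not> E u u" and only_p: "\<forall>x\<in>S. x \<noteq> p \<longrightarrow> \<not> E u x \<and> \<not> E x u"
  shows "offset_sparse E k a (insert u S)"
  unfolding offset_sparse_def
proof
  have load_p: "a p + 1 + a u + card {x\<in>S. E p x} \<le> k" if "p \<in> S"
    using bspec[OF S[unfolded offset_sparse_def] that] by simp
  fix v assume "v \<in> insert u S"
  then consider "v = u" "p \<in> S" | "v = u" "p \<notin> S" | "v = p" "v \<in> S" | "v \<in> S" "v \<noteq> u" "v \<noteq> p"
    by blast
  then show "a v + card {x\<in>insert u S. E v x} \<le> k"
  proof cases
    case 1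
    then have "card {x\<in>insert u S. E v x} \<le> card {p}"
      using assms(5) only_p by (intro card_mono) auto
    then show ?thesis using 1 load_p by simp
  next
    case 2
    then have "{x\<in>insert u S. E v x} = {}" using assms(5) only_p by auto
    then show ?thesis using 2 assms(4) by (simp only: card.empty)
  next
    case 3
    have "card {x\<in>insert u S. E p x} \<le> card (insert u {x\<in>S. E p x})"
      using \<open>finite S\<close> by (intro card_mono) auto
    also have "\<dots> \<le> Suc (card {x\<in>S. E p x})" using \<open>finite S\<close> by (simp add: card_insert_if)
    finally show ?thesis using 3 load_p by simp
  next
    case 4
    then have "{x\<in>insert u S. E v x} = {x\<in>S. E v x}" using only_p by auto
    moreover have "a v + card {x\<in>S. E v x} \<le> k"
      using bspec[OF S[unfolded offset_sparse_def] 4(1)] 4(3) by simp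
    ultimately show ?thesis by simp
  qed
qed

lemma sum_fun_upd_add:
  fixes a :: "'a \<Rightarrow> nat"
  assumes "finite A" "p \<in> A"
  shows "sum (a(p := a p + c)) A = sum a A + c"
  using assms by (simp add: sum.remove sum.cong[of "A - {p}" _ "a(p := a p + c)" a])

lemma one_degenerate_subset: "one_degenerate E W \<Longrightarrow> U \<subseteq> W \<Longrightarrow> one_degenerate E U"
  unfolding one_degenerate_def by (meson subset_trans)

lemma offset_sparse_peel_vertex:
  fixes a :: "'a \<Rightarrow> nat"
  assumes "finite W" and u: "u \<in> W" and deg_u: "card {x\<in>W. E u x} \<le> 1"
    and sym: "\<And>x y. E x y \<Longrightarrow> E y x" and irr: "\<And>x. \<not> E x x"
    and IH: "\<And>a'. \<exists>S\<subseteq>W - {u}. offset_sparse E k a' S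
               \<and> (k + 2) * card (W - {u} - S) \<le> card (W - {u}) + sum a' (W - {u})"
  shows "\<exists>S\<subseteq>W. offset_sparse E k a S \<and> (k + 2) * card (W - S) \<le> card W + sum a W"
proof -
  define W' where "W' = W - {u}"
  have fin_W': "finite W'" and u_W': "u \<notin> W'" using assms(1) by (simp_all add: W'_def)
  have card_W: "card W = Suc (card W')"
    using card_Suc_Diff1[OF assms(1) u] by (simp add: W'_def)
  have sum_W: "sum a W = a u + sum a W'"
    using assms(1) u by (simp add: W'_def sum.remove)
  have remove_u: "W - insert u S = W' - S" for S by (auto simp: W'_def)
  have insert_u: "insert u S \<subseteq> W" if "S \<subseteq> W'" for S using that u by (auto simp: W'_def)
  have "finite {x\<in>W. E u x}" using assms(1) by simp
  then have "{x\<in>W. E u x} = {} \<or> (\<exists>p. {x\<in>W. E u x} = {p})"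
    using deg_u card_1_singleton_iff[of "{x\<in>W. E u x}"] by (cases "card {x\<in>W. E u x}") auto
  then consider "k + 1 \<le> a u" | "a u \<le> k" "{x\<in>W. E u x} = {}"
    | p where "a u \<le> k" "{x\<in>W. E u x} = {p}"
    by (cases "a u \<le> k") auto
  then show ?thesis
  proof cases
    case 1
    obtain S where S: "S \<subseteq> W'" "offset_sparse E k a S" "(k + 2) * card (W' - S) \<le> card W' + sum a W'"
      using IH unfolding W'_def by blast
    have "W - S = insert u (W' - S)" using S(1) u by (auto simp: W'_def)
    then have "card (W - S) = Suc (card (W' - S))" using fin_W' u_W' by simp
    then have bound: "(k + 2) * card (W - S) \<le> card W + sum a W" using S(3) card_W sum_W 1 by simp
    have "S \<subseteq> W" using S(1) by (auto simp: W'_def)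
    then show ?thesis using S(2) bound by blast
  next
    case 2
    obtain S where S: "S \<subseteq> W'" "offset_sparse E k a S" "(k + 2) * card (W' - S) \<le> card W' + sum a W'"
      using IH unfolding W'_def by blast
    have "\<forall>x\<in>S. \<not> E u x \<and> \<not> E x u" using S(1) 2(2) sym unfolding W'_def by blast
    then have sparse: "offset_sparse E k a (insert u S)"
      using S(2) 2(1) irr by (intro offset_sparse_insert_isolated)
    have bound: "(k + 2) * card (W - insert u S) \<le> card W + sum a W"
      using S(3) card_W sum_W by (simp add: remove_u)
    show ?thesis using sparse bound insert_u[OF S(1)] by blast
  next
    case (3 p)
    have p: "p \<in> W'" "p \<noteq> u" using 3(2) irr by (auto simp: W'_def)
    obtain S where S: "S \<subseteq> W'" "offset_sparse E k (a(p := a p + 1 + a u)) S"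
      "(k + 2) * card (W' - S) \<le> card W' + sum (a(p := a p + 1 + a u)) W'"
      using IH unfolding W'_def by blast
    have "finite S" using S(1) fin_W' by (rule finite_subset)
    moreover have "\<forall>x\<in>S. x \<noteq> p \<longrightarrow> \<not> E u x \<and> \<not> E x u"
      using S(1) 3(2) sym unfolding W'_def by blast
    ultimately have sparse: "offset_sparse E k a (insert u S)"
      using S(2) p(2) 3(1) irr by (intro offset_sparse_insert_leaf)
    have "sum (a(p := a p + 1 + a u)) W' = sum a W' + (1 + a u)"
      using sum_fun_upd_add[OF fin_W' p(1), of a "1 + a u"] by (simp only: add.assoc)
    then have bound: "(k + 2) * card (W - insert u S) \<le> card W + sum a W"
      using S(3) card_W sum_W by (simp add: remove_u)
    show ?thesis using sparse bound insert_u[OF S(1)] by blast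
  qed
qed

lemma one_degenerate_offset_sparse_subset:
  assumes "finite W" "one_degenerate E W" and sym: "\<And>x y. E x y \<Longrightarrow> E y x" and irr: "\<And>x. \<not> E x x"
  shows "\<exists>S\<subseteq>W. offset_sparse E k a S \<and> (k + 2) * card (W - S) \<le> card W + sum a W"
  using assms(1,2)
proof (induction W arbitrary: a rule: finite_psubset_induct)
  case (psubset W)
  show ?case
  proof (cases "W = {}")
    case True
    then show ?thesis by (auto simp: offset_sparse_def)
  next
    case False
    then obtain u where u: "u \<in> W" and deg_u: "card {x\<in>W. E u x} \<le> 1"
      using psubset.prems unfolding one_degenerate_def by (meson order_refl)
    have smaller: "W - {u} \<subset> W" "one_degenerate E (W - {u})"
      using u one_degenerate_subset[OF psubset.prems] by auto
    show ?thesis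
      by (rule offset_sparse_peel_vertex[OF psubset.hyps u deg_u sym irr psubset.IH[OF smaller]])
  qed
qed

lemma one_degenerate_sparse_subset:
  assumes "finite W" "one_degenerate E W" "\<And>x y. E x y \<Longrightarrow> E y x" "\<And>x. \<not> E x x"
  obtains S where "k_sparse W E k S" "(k + 1) * card W \<le> (k + 2) * card S"
proof -
  obtain S where S: "S \<subseteq> W" "offset_sparse E k (\<lambda>_. 0) S" "(k + 2) * card (W - S) \<le> card W"
    using one_degenerate_offset_sparse_subset[OF assms, of k "\<lambda>_. 0"] by auto
  have "card (W - S) = card W - card S" "card S \<le> card W"
    using S(1) assms(1) by (simp_all add: card_Diff_subset finite_subset card_mono)
  then have "(k + 1) * card W \<le> (k + 2) * card S"
    using S(3) by (simp add: algebra_simps diff_mult_distrib2)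
  then show thesis using that S(1,2) by (simp add: k_sparse_def offset_sparse_def)
qed

lemma card_le_alpha_k:
  assumes "finite V" "k_sparse V E k S"
  shows "card S \<le> alpha_k V E k"
proof -
  have "{card S | S. k_sparse V E k S} \<subseteq> card ` Pow V" by (auto simp: k_sparse_def)
  then have "finite {card S | S. k_sparse V E k S}" using assms(1) finite_subset by blast
  then show ?thesis unfolding alpha_k_def using assms(2) Max_ge by blast
qed

theorem lemma3p2:
  fixes V :: "'a set" and E :: "'a \<Rightarrow> 'a \<Rightarrow> bool" and k :: nat
  assumes "forest V E"
  shows "\<lceil>(real k + 1) / (real k + 2) * real (card V)\<rceil> \<le> int (alpha_k V E k)"
proof -
  have "simple_graph V E" using assms by (simp add: forest_def)
  then have fin: "finite V" and sym: "\<And>x y. E x y \<Longrightarrow> E y x" and irr: "\<And>x. \<not> E x x"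
    unfolding simple_graph_def by metis+
  obtain S where "k_sparse V E k S" and large: "(k + 1) * card V \<le> (k + 2) * card S"
    using one_degenerate_sparse_subset[OF fin forest_one_degenerate[OF assms] sym irr] by blast
  then have "card S \<le> alpha_k V E k" by (intro card_le_alpha_k[OF fin])
  then have "(k + 1) * card V \<le> (k + 2) * alpha_k V E k"
    using large mult_le_mono2 order_trans by blast
  then have "real ((k + 1) * card V) \<le> real ((k + 2) * alpha_k V E k)"
    by (simp only: of_nat_le_iff)
  then have "(real k + 1) * real (card V) \<le> real (alpha_k V E k) * (real k + 2)"
    by (simp add: algebra_simps)
  then have "(real k + 1) / (real k + 2) * real (card V) \<le> real (alpha_k V E k)"
    by (simp add: divide_le_eq)
  then show ?thesis by (simp add: ceiling_le)
qed

end
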